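(* Let $n\ge1$ and let $B\in\mathcal S(\mathbb C^n,\mathbb C)$ satisfy $\log(1-BB^* )\in L^1(\mathbb T)$. Let $a\in\mathcal S(\mathbb C,\mathbb C)$ be an outer function with $\sum_{j=1}^n|b_j(\zeta)|^2+|a(\zeta)|^2=1$ for a.e. $\zeta\in\mathbb T$, and let $A:\mathbb D\to\mathcal L(\mathbb C^n,\mathbb C^n)$ be an outer function with $B(\zeta)^*B(\zeta)+A(\zeta)^*A(\zeta)=I$ for a.e. $\zeta\in\mathbb T$. Then $$B(\zeta)\big(A(\zeta)^*A(\zeta)\big)^{-1}B(\zeta)^*=\frac{B(\zeta)B(\zeta)^*}{|a(\zeta)|^2}\quad\text{for a.e. }\zeta\in\mathbb T.$$
   Context: $\mathbb D$ is the open unit disc, $\mathbb T$ the unit circle. $\mathcal S(\mathbb C^n,\mathbb C)$ is the set of holomorphic maps $B=(b_1,\dots,b_n):\mathbb D\to\mathcal L(\mathbb C^n,\mathbb C)$ (row vectors) with $\sup_{z\in\mathbb D}\|B(z)\|\le1$; boundary values on $\mathbb T$ are taken a.e. A scalar $a\in H^\infty$ is outer in the usual sense; a bounded holomorphic $A:\mathbb D\to\mathcal L(\mathbb C^n,\mathbb C^n)$ is outer if $\{Ap: p\text{ a }\mathbb C^n\text{-valued polynomial}\}$ is dense in the Hardy space $H^2_{\mathbb C^n}$. *)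

theory Defs
  imports "HOL-Complex_Analysis.Complex_Analysis"
begin

text \<open>Boundary values on the unit circle: radial limits (they exist a.e. for
  bounded holomorphic functions by Fatou's theorem).\<close>
definition bv :: "(complex \<Rightarrow> 'a::t2_space) \<Rightarrow> complex \<Rightarrow> 'a" where
  "bv f \<zeta> = Lim (at_left (1::real)) (\<lambda>r. f (complex_of_real r * \<zeta>))"

definition AE_T :: "(complex \<Rightarrow> bool) \<Rightarrow> bool" where
  "AE_T P \<longleftrightarrow> (AE t in lebesgue_on {0..2*pi}. P (cis t))"

definition log_L1_T :: "(complex \<Rightarrow> real) \<Rightarrow> bool" where
  "log_L1_T g \<longleftrightarrow> AE_T (\<lambda>\<zeta>. g \<zeta> > 0) \<and>
     integrable (lebesgue_on {0..2*pi}) (\<lambda>t. ln (g (cis t)))"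

text \<open>Schur class S(C^n,C): holomorphic row vectors B = (b_1..b_n) with
  sup norm at most 1 (operator norm of a row vector = Euclidean norm).\<close>
definition schur_row :: "(complex \<Rightarrow> complex^'n::finite) \<Rightarrow> bool" where
  "schur_row B \<longleftrightarrow> (\<forall>j. (\<lambda>z. B z $ j) holomorphic_on ball 0 1) \<and>
     (\<forall>z\<in>ball 0 1. norm (B z) \<le> 1)"

definition schur_scalar :: "(complex \<Rightarrow> complex) \<Rightarrow> bool" where
  "schur_scalar a \<longleftrightarrow> a holomorphic_on ball 0 1 \<and> (\<forall>z\<in>ball 0 1. cmod (a z) \<le> 1)"

definition outer_scalar :: "(complex \<Rightarrow> complex) \<Rightarrow> bool" where
  "outer_scalar a \<longleftrightarrow> a holomorphic_on ball 0 1 \<and> bounded (a ` ball 0 1) \<and>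
     log_L1_T (\<lambda>\<zeta>. cmod (bv a \<zeta>)) \<and>
     (\<exists>c. cmod c = 1 \<and> (\<forall>z\<in>ball 0 1.
        a z = c * exp (complex_of_real (1 / (2*pi)) *
          (LINT t|lebesgue_on {0..2*pi}.
             (cis t + z) / (cis t - z) * complex_of_real (ln (cmod (bv a (cis t))))))))"

definition H2_normsq :: "(complex \<Rightarrow> complex^'n::finite) \<Rightarrow> real" where
  "H2_normsq f = (SUP r\<in>{0<..<1}. integral {0..2*pi} (\<lambda>t. (norm (f (complex_of_real r * cis t)))\<^sup>2) / (2*pi))"

definition H2 :: "(complex \<Rightarrow> complex^'n::finite) \<Rightarrow> bool" where
  "H2 f \<longleftrightarrow> (\<forall>j. (\<lambda>z. f z $ j) holomorphic_on ball 0 1) \<and>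
     bdd_above ((\<lambda>r. integral {0..2*pi} (\<lambda>t. (norm (f (complex_of_real r * cis t)))\<^sup>2)) ` {0<..<1})"

definition outer_mat :: "(complex \<Rightarrow> complex^'n^'n::finite) \<Rightarrow> bool" where
  "outer_mat A \<longleftrightarrow> (\<forall>i j. (\<lambda>z. A z $ i $ j) holomorphic_on ball 0 1) \<and>
     bounded (A ` ball 0 1) \<and>
     (\<forall>f. H2 f \<longrightarrow> (\<forall>e>0. \<exists>P :: 'n \<Rightarrow> complex poly.
        H2_normsq (\<lambda>z. A z *v (\<chi> j. poly (P j) z) - f z) < e))"

definition adj :: "complex^'n^'m \<Rightarrow> complex^'m^'n" where
  "adj M = (\<chi> i j. cnj (M $ j $ i))"

text \<open>For a row vector b: B^* B (n x n), B M B^* (scalar), B B^* (scalar).\<close>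
definition row_gram :: "complex^'n \<Rightarrow> complex^'n^'n" where
  "row_gram b = (\<chi> i j. cnj (b $ i) * b $ j)"

definition row_sandwich :: "complex^'n::finite \<Rightarrow> complex^'n^'n \<Rightarrow> complex" where
  "row_sandwich b M = (\<Sum>i\<in>UNIV. \<Sum>j\<in>UNIV. b $ i * M $ i $ j * cnj (b $ j))"

definition row_sqnorm :: "complex^'n::finite \<Rightarrow> real" where
  "row_sqnorm b = (\<Sum>j\<in>UNIV. (cmod (b $ j))\<^sup>2)"

end

theory Submission
  imports Defs
begin

text \<open>On the circle the hypotheses give, almost everywhere, \<open>A\<^sup>*A = I - P\<close> with the
  rank-one matrix \<open>P = B\<^sup>*B\<close>, and \<open>|a|\<^sup>2 = 1 - s\<close> where \<open>s = BB\<^sup>*\<close>; integrability of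
  \<open>log (1 - s)\<close> forces \<open>s < 1\<close> a.e.  Since \<open>P\<^sup>2 = s P\<close>, the inverse of \<open>I - P\<close> is
  \<open>I + P/(1 - s)\<close> (Sherman-Morrison), and then \<open>B (I - P)\<^sup>-\<^sup>1 B\<^sup>* = s + s\<^sup>2/(1 - s) = s/(1 - s)\<close>.\<close>

lemma matrix_inv_unique:
  fixes A B :: "'a::semiring_1^'n^'n"
  assumes "A ** B = mat 1" "B ** A = mat 1"
  shows "matrix_inv A = B"
proof -
  let ?X = "matrix_inv A"
  have X: "A ** ?X = mat 1 \<and> ?X ** A = mat 1"
    unfolding matrix_inv_def
    by (rule someI[where P = "\<lambda>X. A ** X = mat 1 \<and> X ** A = mat 1"]) (use assms in blast)
  have "?X = (?X ** A) ** B"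
    using assms(1) by (metis matrix_mul_assoc matrix_mul_rid)
  also have "\<dots> = B"
    using X by simp
  finally show ?thesis .
qed

lemma matrix_add_rdistrib: "(A + B) ** C = A ** C + B ** C"
  by (vector matrix_matrix_mult_def sum.distrib[symmetric] algebra_simps)

lemma matrix_diff_ldistrib:
  fixes A :: "'a::ring_1^'n^'m"
  shows "A ** (B - C) = A ** B - A ** C"
  by (vector matrix_matrix_mult_def sum_subtractf[symmetric] algebra_simps)

lemma matrix_diff_rdistrib:
  fixes A :: "'a::ring_1^'n^'m"
  shows "(A - B) ** C = A ** C - B ** C"
  by (vector matrix_matrix_mult_def sum_subtractf[symmetric] algebra_simps)

lemma matrix_inv_mat1_minus:
  fixes P :: "'a::real_algebra_1^'n^'n"
  assumes square: "P ** P = s *\<^sub>R P" and "s \<noteq> 1"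
  shows "matrix_inv (mat 1 - P) = mat 1 + (1 / (1 - s)) *\<^sub>R P"
proof (rule matrix_inv_unique)
  let ?e = "1 / (1 - s)"
  have "?e *\<^sub>R P - (P + ?e *\<^sub>R (P ** P)) = (?e - 1 - ?e * s) *\<^sub>R P"
    by (simp add: square scaleR_left_diff_distrib)
  also have "?e - 1 - ?e * s = 0"
    using \<open>s \<noteq> 1\<close> by (simp add: field_simps)
  finally have cancel: "?e *\<^sub>R P - (P + ?e *\<^sub>R (P ** P)) = 0"
    by simp
  have "P ** (?e *\<^sub>R P) = ?e *\<^sub>R (P ** P)" "(?e *\<^sub>R P) ** P = ?e *\<^sub>R (P ** P)"
    by (simp_all add: matrix_scalar_ac scalar_matrix_assoc)
  then show "(mat 1 - P) ** (mat 1 + ?e *\<^sub>R P) = mat 1"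
    and "(mat 1 + ?e *\<^sub>R P) ** (mat 1 - P) = mat 1"
    using cancel by (simp_all add: matrix_diff_rdistrib matrix_add_ldistrib
        matrix_add_rdistrib matrix_diff_ldistrib algebra_simps)
qed

lemma row_sqnorm_eq_sum: "complex_of_real (row_sqnorm b) = (\<Sum>k\<in>UNIV. b $ k * cnj (b $ k))"
  unfolding row_sqnorm_def of_real_sum complex_norm_square ..

lemma row_gram_mult_row_gram: "row_gram b ** row_gram b = row_sqnorm b *\<^sub>R row_gram b"
  unfolding vec_eq_iff
  by (simp add: matrix_matrix_mult_def row_gram_def scaleR_conv_of_real[where 'a = complex]
      row_sqnorm_eq_sum sum_distrib_left sum_distrib_right mult_ac)

lemma row_sandwich_add: "row_sandwich b (M + N) = row_sandwich b M + row_sandwich b N"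
  by (simp add: row_sandwich_def sum.distrib[symmetric] algebra_simps)

lemma row_sandwich_scaleR: "row_sandwich b (r *\<^sub>R M) = of_real r * row_sandwich b M"
  by (simp add: row_sandwich_def sum_distrib_left scaleR_conv_of_real[where 'a = complex] mult_ac)

lemma row_sandwich_mat1: "row_sandwich b (mat 1) = of_real (row_sqnorm b)"
  by (simp add: row_sandwich_def mat_def row_sqnorm_eq_sum if_distrib if_distribR
      sum.delta cong: if_cong)

lemma row_sandwich_row_gram: "row_sandwich b (row_gram b) = of_real (row_sqnorm b ^ 2)"
  by (simp add: row_sandwich_def row_gram_def row_sqnorm_eq_sum power2_eq_square
      sum_product mult_ac)

lemma row_sandwich_matrix_inv_mat1_minus_row_gram:
  assumes "row_sqnorm b \<noteq> 1"
  shows "row_sandwich b (matrix_inv (mat 1 - row_gram b))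
           = of_real (row_sqnorm b / (1 - row_sqnorm b))"
proof -
  let ?s = "row_sqnorm b"
  have "row_sandwich b (matrix_inv (mat 1 - row_gram b)) = of_real (?s + ?s ^ 2 / (1 - ?s))"
    using matrix_inv_mat1_minus[OF row_gram_mult_row_gram assms]
    by (simp add: row_sandwich_add row_sandwich_scaleR row_sandwich_mat1 row_sandwich_row_gram)
  also have "?s + ?s ^ 2 / (1 - ?s) = ?s / (1 - ?s)"
    using assms by (simp add: field_simps power2_eq_square)
  finally show ?thesis .
qed

theorem lemma4p3:
  fixes B :: "complex \<Rightarrow> complex^'n::finite"
    and a :: "complex \<Rightarrow> complex"
    and A :: "complex \<Rightarrow> complex^'n^'n"
  assumes "schur_row B"
    and "log_L1_T (\<lambda>\<zeta>. 1 - row_sqnorm (bv B \<zeta>))"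
    and "schur_scalar a" and "outer_scalar a"
    and "AE_T (\<lambda>\<zeta>. row_sqnorm (bv B \<zeta>) + (cmod (bv a \<zeta>))\<^sup>2 = 1)"
    and "outer_mat A"
    and "AE_T (\<lambda>\<zeta>. row_gram (bv B \<zeta>) + adj (bv A \<zeta>) ** bv A \<zeta> = mat 1)"
  shows "AE_T (\<lambda>\<zeta>. row_sandwich (bv B \<zeta>) (matrix_inv (adj (bv A \<zeta>) ** bv A \<zeta>))
                  = complex_of_real (row_sqnorm (bv B \<zeta>) / (cmod (bv a \<zeta>))\<^sup>2))"
proof -
  have "AE_T (\<lambda>\<zeta>. 1 - row_sqnorm (bv B \<zeta>) > 0)"
    using assms(2) unfolding log_L1_T_def by blast
  with assms(5,7) show ?thesis
    unfolding AE_T_def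
  proof (elim AE_mp, intro AE_I2 impI)
    fix t
    let ?b = "bv B (cis t)" and ?A = "bv A (cis t)"
    assume "row_gram ?b + adj ?A ** ?A = mat 1"
      and "row_sqnorm ?b + (cmod (bv a (cis t)))\<^sup>2 = 1"
      and "1 - row_sqnorm ?b > 0"
    then have "adj ?A ** ?A = mat 1 - row_gram ?b"
      and "(cmod (bv a (cis t)))\<^sup>2 = 1 - row_sqnorm ?b" and "row_sqnorm ?b \<noteq> 1"
      by (auto simp: algebra_simps)
    then show "row_sandwich ?b (matrix_inv (adj ?A ** ?A))
                 = complex_of_real (row_sqnorm ?b / (cmod (bv a (cis t)))\<^sup>2)"
      by (simp add: row_sandwich_matrix_inv_mat1_minus_row_gram)
  qed
qed

end
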